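(* Let $(f_k(t))_{k=0,\ldots,n}$, $t\in[0,1]$, be a constant speed path with speed $v\neq 0$ and coefficients $\boldsymbol\alpha\in\mathcal A$, with $f_k(t)>0$ for all $k,t$, $f_k$ twice continuously differentiable and $\alpha_k$ continuously differentiable in $t$. Let $t^*\in(0,1)$ and suppose that at $t=t^*$: (1) $\alpha_k\le\alpha_{k+1}$ for all $k=0,\ldots,n-1$; (3) $\alpha_{k+1}(1-\alpha_{k+1})f_{k+1}^2-\alpha_{k+2}(1-\alpha_k)f_kf_{k+2}\ge0$ for all $k=0,\ldots,n-2$; (4) for all $k=0,\ldots,n-2$ we have $f_{k+1}^2-f_kf_{k+2}>0$ and $h_k\le\widetilde h_k$, where $$\widetilde h_k:=\frac{2g_kg_{k+1}f_{k+1}-g_k^2f_{k+2}-g_{k+1}^2f_k}{f_{k+1}^2-f_kf_{k+2}}$$ and $$h_k:=(1-\alpha_k)(1-\alpha_{k+1})f_k+2\alpha_{k+1}(1-\alpha_{k+1})f_{k+1}+\alpha_{k+1}\alpha_{k+2}f_{k+2}-\frac1v f_{k+1}\frac{\partial\alpha_{k+1}}{\partial t}$$ (all evaluated at $t^*$). Then the entropy $H(t)=-\sum_{k=0}^nf_k(t)\log f_k(t)$ satisfies $H''(t^* )\le0$.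
   Context: Fix an integer $n\ge1$. For a sequence $(a_k)_{k\in\mathbb Z}$ write $\nabla_1 a_k=a_k-a_{k-1}$. Functions indexed by $k$ are extended by $0$ outside their stated index range. $\mathcal A$ denotes the set of measurable $\boldsymbol\alpha(t)=(\alpha_0(t),\ldots,\alpha_n(t))$, $t\in[0,1]$, with $\alpha_0\equiv0$, $\alpha_n\equiv1$ and $0\le\alpha_k(t)\le1$ for all $k,t$. A family $(f_k(t))_{k=0,\ldots,n}$ of probability mass functions on $\{0,\ldots,n\}$ is a constant speed path with speed $v\in\mathbb R$ and coefficients $\boldsymbol\alpha\in\mathcal A$ if $\frac{\partial f_k}{\partial t}(t)=-v\,\nabla_1 g_k(t)$ for $k=0,\ldots,n$, where $g_k(t)=\alpha_{k+1}(t)f_{k+1}(t)+(1-\alpha_k(t))f_k(t)$ for $k=0,\ldots,n-1$ and $g_k=0$ for $k\notin\{0,\ldots,n-1\}$. *)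

theory Defs
  imports "HOL-Analysis.Analysis"
begin

definition coeffs_A :: "nat \<Rightarrow> (nat \<Rightarrow> real \<Rightarrow> real) \<Rightarrow> bool" where
  "coeffs_A n \<alpha> \<longleftrightarrow>
     (\<forall>k\<le>n. (\<alpha> k) \<in> borel_measurable (lebesgue_on {0..1})) \<and>
     (\<forall>t\<in>{0..1}. \<alpha> 0 t = 0 \<and> \<alpha> n t = 1 \<and> (\<forall>k\<le>n. 0 \<le> \<alpha> k t \<and> \<alpha> k t \<le> 1))"

definition gfun :: "nat \<Rightarrow> (nat \<Rightarrow> real \<Rightarrow> real) \<Rightarrow> (nat \<Rightarrow> real \<Rightarrow> real) \<Rightarrow> nat \<Rightarrow> real \<Rightarrow> real" where
  "gfun n \<alpha> f k t = (if k < n then \<alpha> (k+1) t * f (k+1) t + (1 - \<alpha> k t) * f k t else 0)"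

definition nabla1 :: "(nat \<Rightarrow> real) \<Rightarrow> nat \<Rightarrow> real" where
  "nabla1 a k = (if k = 0 then a 0 else a k - a (k - 1))"

definition pmf_family :: "nat \<Rightarrow> (nat \<Rightarrow> real \<Rightarrow> real) \<Rightarrow> bool" where
  "pmf_family n f \<longleftrightarrow> (\<forall>t\<in>{0..1}. (\<forall>k\<le>n. 0 \<le> f k t) \<and> (\<Sum>k\<le>n. f k t) = 1)"

definition const_speed_path ::
  "nat \<Rightarrow> (nat \<Rightarrow> real \<Rightarrow> real) \<Rightarrow> real \<Rightarrow> (nat \<Rightarrow> real \<Rightarrow> real) \<Rightarrow> bool" where
  "const_speed_path n f v \<alpha> \<longleftrightarrow> pmf_family n f \<and> coeffs_A n \<alpha> \<and>
     (\<forall>k\<le>n. \<forall>t\<in>{0..1}.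
        (f k has_real_derivative (- v * nabla1 (\<lambda>j. gfun n \<alpha> f j t) k)) (at t within {0..1}))"

end

theory Submission
  imports Defs
begin

text \<open>
  Write g'_k for the time derivative of g_k, so that f''_k = -v \<nabla>g'_k and
  H'' = -\<Sum> f''_k (log f_k + 1) - \<Sum> (f'_k)^2 / f_k. The f''_k sum to zero. The partial sums
  \<Sum>_{j \<le> k} g'_j equal -v h_k for k \<le> n - 2 and vanish for k = n - 1, so summing by parts twice
  gives \<Sum> f''_k log f_k = v^2 \<Sum> h_k l_k with l_k = log f_k - 2 log f_{k+1} + log f_{k+2}.
  Expanding \<Sum> (f'_k)^2 / f_k = v^2 \<Sum> (\<nabla>g_k)^2 / f_k and dropping nonnegative boundary terms
  leaves at least v^2 \<Sum> Q_k, where Q_k = g_k^2/f_k - 2 g_k g_{k+1}/f_{k+1} + g_{k+1}^2/f_{k+2}.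
  So it suffices that h_k l_k + Q_k \<ge> 0. Strict log-concavity gives l_k < 0, hence
  h_k l_k \<ge> htilde_k l_k; and the bound 2 log y \<le> y - 1/y at y = f_{k+1} / sqrt (f_k f_{k+2}),
  together with AM-GM, shows -htilde_k l_k \<le> Q_k.
\<close>

lemma two_ln_le_diff_inverse:
  fixes y :: real
  assumes "1 \<le> y"
  shows "2 * ln y \<le> y - 1 / y"
proof -
  let ?g = "\<lambda>x::real. x - 1 / x - 2 * ln x"
  have "?g 1 \<le> ?g y"
  proof (rule deriv_nonneg_imp_mono[where g = ?g and g' = "\<lambda>x. 1 + 1 / x^2 - 2 / x"])
    fix x :: real assume "x \<in> {1..y}"
    then have "x > 0" by auto
    show "(?g has_real_derivative 1 + 1 / x^2 - 2 / x) (at x)"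
      by (auto intro!: derivative_eq_intros)
        (use \<open>x > 0\<close> in \<open>simp_all add: diff_divide_distrib power2_eq_square\<close>)
    have "1 + 1 / x^2 - 2 / x = (1 - 1 / x)^2"
      using \<open>x > 0\<close> by (simp add: power2_eq_square field_simps)
    then show "1 + 1 / x^2 - 2 / x \<ge> 0" by simp
  qed (use assms in auto)
  then show ?thesis by simp
qed

lemma ln_second_difference_bounds:
  fixes A B C s :: real
  assumes "A > 0" "B > 0" "C > 0" "s > 0" "s^2 = A * C" "s < B"
  shows "ln A - 2 * ln B + ln C < 0"
    and "- (ln A - 2 * ln B + ln C) \<le> (B^2 - A * C) / (B * s)"
proof -
  have "ln A + ln C = ln (s^2)"
    using assms by (simp add: ln_mult)
  also have "\<dots> = 2 * ln s"
    using \<open>s > 0\<close> by (simp add: ln_realpow)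
  finally have eq: "- (ln A - 2 * ln B + ln C) = 2 * ln (B / s)"
    using assms by (simp add: ln_div)
  have "0 < ln (B / s)" using assms by simp
  then show "ln A - 2 * ln B + ln C < 0" using eq by linarith
  have "2 * ln (B / s) \<le> B / s - 1 / (B / s)"
    using assms by (intro two_ln_le_diff_inverse) simp
  also have "\<dots> = (B^2 - A * C) / (B * s)"
    using assms by (simp add: field_simps power2_eq_square)
  finally show "- (ln A - 2 * ln B + ln C) \<le> (B^2 - A * C) / (B * s)"
    using eq by simp
qed

lemma weighted_square_sum_bounds:
  fixes A B C a b s :: real
  assumes "A > 0" "B > 0" "C > 0" "s > 0" "s^2 = A * C" "s \<le> B"
  shows "0 \<le> a^2 / A + b^2 / C - 2 * a * b / B"
    and "(2 * a * b * B - a^2 * C - b^2 * A) / (B * s) \<le> a^2 / A + b^2 / C - 2 * a * b / B"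
proof -
  have amgm: "2 * \<bar>a * b\<bar> * s \<le> a^2 * C + b^2 * A"
  proof -
    have "0 \<le> C * (\<bar>a\<bar> * C - \<bar>b\<bar> * s)^2" using assms by simp
    also have "\<dots> = C^2 * (a^2 * C + b^2 * A - 2 * \<bar>a * b\<bar> * s)"
      using assms by (simp add: power2_eq_square algebra_simps abs_mult)
    finally show ?thesis using assms by (simp add: zero_le_mult_iff)
  qed
  have T: "a^2 / A + b^2 / C - 2 * a * b / B = (a^2 * C + b^2 * A) / s^2 - 2 * a * b / B"
    using assms by (simp add: add_divide_distrib)
  have "2 * a * b / B \<le> 2 * \<bar>a * b\<bar> / B" using assms by (simp add: divide_right_mono)
  also have "\<dots> \<le> 2 * \<bar>a * b\<bar> / s" using assms by (simp add: frac_le)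
  also have "\<dots> = 2 * \<bar>a * b\<bar> * s / s^2" using \<open>s > 0\<close> by (simp add: power2_eq_square)
  also have "\<dots> \<le> (a^2 * C + b^2 * A) / s^2" using amgm assms by (simp add: divide_right_mono)
  finally show "0 \<le> a^2 / A + b^2 / C - 2 * a * b / B" using T by simp
  have "(a^2 / A + b^2 / C - 2 * a * b / B) - (2 * a * b * B - a^2 * C - b^2 * A) / (B * s)
      = (a^2 * C + b^2 * A) * (1 / s^2 + 1 / (B * s)) - 2 * a * b * (1 / B + 1 / s)"
    using assms by (simp add: field_simps)
  also have "\<dots> \<ge> 2 * \<bar>a * b\<bar> * s * (1 / s^2 + 1 / (B * s)) - 2 * a * b * (1 / B + 1 / s)"
    using amgm assms by (simp add: mult_right_mono)
  moreover have "2 * \<bar>a * b\<bar> * s * (1 / s^2 + 1 / (B * s)) = 2 * \<bar>a * b\<bar> * (1 / B + 1 / s)"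
    using \<open>s > 0\<close> by (simp add: field_simps power2_eq_square)
  moreover have "2 * a * b * (1 / B + 1 / s) \<le> 2 * \<bar>a * b\<bar> * (1 / B + 1 / s)"
    using assms by (intro mult_right_mono) auto
  ultimately show
    "(2 * a * b * B - a^2 * C - b^2 * A) / (B * s) \<le> a^2 / A + b^2 / C - 2 * a * b / B"
    by simp
qed

lemma ln_second_difference_weighted_bound:
  fixes A B C a b h :: real
  assumes pos: "A > 0" "B > 0" "C > 0" and concave: "A * C < B^2"
    and h: "h \<le> (2 * a * b * B - a^2 * C - b^2 * A) / (B^2 - A * C)"
  shows "0 \<le> h * (ln A - 2 * ln B + ln C) + (a^2 / A + b^2 / C - 2 * a * b / B)"
proof -
  define s where "s = sqrt (A * C)"
  define N where "N = 2 * a * b * B - a^2 * C - b^2 * A"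
  define l where "l = ln A - 2 * ln B + ln C"
  define T where "T = a^2 / A + b^2 / C - 2 * a * b / B"
  have s: "s > 0" "s^2 = A * C" using pos by (auto simp: s_def)
  have "s < B" using s concave pos by (auto intro: power2_less_imp_less)
  note ln_bounds = ln_second_difference_bounds[OF pos s \<open>s < B\<close>, folded l_def]
  note T_bounds = weighted_square_sum_bounds[OF pos s less_imp_le[OF \<open>s < B\<close>], of a b,
      folded N_def T_def]
  define L where "L = - l / (B^2 - A * C)"
  have K: "B^2 - A * C > 0" using concave by simp
  have "0 < L" using ln_bounds(1) K by (simp add: L_def divide_neg_pos)
  have "L \<le> (B^2 - A * C) / (B * s) / (B^2 - A * C)"
    unfolding L_def by (rule divide_right_mono[OF ln_bounds(2)]) (use K in simp)
  then have "L \<le> 1 / (B * s)" using K by simp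
  have "N * L \<le> T"
  proof (cases "N \<le> 0")
    case True
    then have "N * L \<le> 0" using \<open>0 < L\<close> by (simp add: mult_nonpos_nonneg)
    then show ?thesis using T_bounds by linarith
  next
    case False
    then have "N * L \<le> N * (1 / (B * s))"
      using \<open>L \<le> 1 / (B * s)\<close> by (intro mult_left_mono) auto
    then show ?thesis using T_bounds by simp
  qed
  moreover have "- (N * L) \<le> h * l"
    using mult_right_mono_neg[OF h, of l] ln_bounds by (simp add: L_def N_def)
  ultimately show ?thesis by (simp add: l_def T_def)
qed

lemma sum_nabla1: "(\<Sum>k\<le>m. nabla1 x k) = x m"
  by (induction m) (auto simp: nabla1_def)

lemma sum_nabla1_mult_second_difference:
  "(\<Sum>k\<le>Suc m. nabla1 x k * y k) =
     (\<Sum>k<m. (\<Sum>j\<le>k. x j) * (y k - 2 * y (Suc k) + y (Suc (Suc k))))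
     + (\<Sum>j\<le>m. x j) * (y m - y (Suc m)) + x (Suc m) * y (Suc m)"
  by (induction m) (auto simp: nabla1_def algebra_simps)

lemma sum_nabla1_square_div:
  "(\<Sum>k\<le>m. (nabla1 g k)^2 / f k) =
     (\<Sum>k\<le>m. (g k)^2 / f k) + (\<Sum>k<m. (g k)^2 / f (Suc k))
     - 2 * (\<Sum>k<m. g k * g (Suc k) / f (Suc k))"
  by (induction m)
    (auto simp: nabla1_def power2_eq_square algebra_simps add_divide_distrib diff_divide_distrib)

lemma sum_nabla1_square_div_ge:
  fixes g f :: "nat \<Rightarrow> real"
  assumes "g (Suc m) = 0" and "\<forall>k\<le>Suc m. f k > 0"
  shows "(\<Sum>k<m. (g k)^2 / f k + (g (Suc k))^2 / f (Suc (Suc k)) - 2 * g k * g (Suc k) / f (Suc k))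
    \<le> (\<Sum>k\<le>Suc m. (nabla1 g k)^2 / f k)"
proof -
  have "(\<Sum>k<m. (g k)^2 / f k) \<le> (\<Sum>k\<le>Suc m. (g k)^2 / f k)"
    using assms by (intro sum_mono2) auto
  moreover have "(\<Sum>k<m. (g (Suc k))^2 / f (Suc (Suc k))) \<le> (\<Sum>k<Suc m. (g k)^2 / f (Suc k))"
    using assms(2) unfolding sum.lessThan_Suc_shift by (simp add: add_increasing divide_nonneg_pos)
  moreover have "(\<Sum>k<Suc m. g k * g (Suc k) / f (Suc k)) = (\<Sum>k<m. g k * g (Suc k) / f (Suc k))"
    using assms by simp
  moreover have
    "(\<Sum>k<m. (g k)^2 / f k + (g (Suc k))^2 / f (Suc (Suc k)) - 2 * g k * g (Suc k) / f (Suc k))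
      = (\<Sum>k<m. (g k)^2 / f k) + (\<Sum>k<m. (g (Suc k))^2 / f (Suc (Suc k)))
        - 2 * (\<Sum>k<m. g k * g (Suc k) / f (Suc k))"
    by (simp add: sum.distrib sum_subtractf sum_distrib_left mult.assoc)
  ultimately show ?thesis
    using sum_nabla1_square_div[of g f "Suc m"] by linarith
qed

text \<open>The arguments \<open>\<alpha>'\<close> and \<open>f'\<close> hold the time derivatives of \<open>\<alpha>\<close> and \<open>f\<close> at \<open>t\<close> only.\<close>

definition gfun_deriv ::
  "nat \<Rightarrow> (nat \<Rightarrow> real \<Rightarrow> real) \<Rightarrow> (nat \<Rightarrow> real) \<Rightarrow> (nat \<Rightarrow> real \<Rightarrow> real) \<Rightarrow> (nat \<Rightarrow> real)
    \<Rightarrow> nat \<Rightarrow> real \<Rightarrow> real" where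
  "gfun_deriv n \<alpha> \<alpha>' f f' k t =
     (if k < n then \<alpha>' (k+1) * f (k+1) t + \<alpha> (k+1) t * f' (k+1) - \<alpha>' k * f k t + (1 - \<alpha> k t) * f' k
      else 0)"

definition h_coeff ::
  "real \<Rightarrow> (nat \<Rightarrow> real \<Rightarrow> real) \<Rightarrow> (nat \<Rightarrow> real) \<Rightarrow> (nat \<Rightarrow> real \<Rightarrow> real) \<Rightarrow> nat \<Rightarrow> real \<Rightarrow> real" where
  "h_coeff v \<alpha> \<alpha>' f k t =
     (1 - \<alpha> k t) * (1 - \<alpha> (k+1) t) * f k t + 2 * \<alpha> (k+1) t * (1 - \<alpha> (k+1) t) * f (k+1) t
     + \<alpha> (k+1) t * \<alpha> (k+2) t * f (k+2) t - 1 / v * f (k+1) t * \<alpha>' (k+1)"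

definition h_tilde :: "nat \<Rightarrow> (nat \<Rightarrow> real \<Rightarrow> real) \<Rightarrow> (nat \<Rightarrow> real \<Rightarrow> real) \<Rightarrow> nat \<Rightarrow> real \<Rightarrow> real" where
  "h_tilde n \<alpha> f k t =
     (2 * gfun n \<alpha> f k t * gfun n \<alpha> f (k+1) t * f (k+1) t - (gfun n \<alpha> f k t)^2 * f (k+2) t
      - (gfun n \<alpha> f (k+1) t)^2 * f k t) / ((f (k+1) t)^2 - f k t * f (k+2) t)"

lemma has_real_derivative_gfun:
  assumes "\<And>j. j \<le> n \<Longrightarrow> (\<alpha> j has_real_derivative \<alpha>' j) (at t)"
    and "\<And>j. j \<le> n \<Longrightarrow> (f j has_real_derivative f' j) (at t)"
  shows "((\<lambda>s. gfun n \<alpha> f k s) has_real_derivative gfun_deriv n \<alpha> \<alpha>' f f' k t) (at t)"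
proof (cases "k < n")
  case True
  then have "((\<lambda>s. \<alpha> (k+1) s * f (k+1) s + (1 - \<alpha> k s) * f k s) has_real_derivative
      gfun_deriv n \<alpha> \<alpha>' f f' k t) (at t)"
    using assms by (auto intro!: derivative_eq_intros simp: gfun_deriv_def algebra_simps)
  with True show ?thesis by (simp add: gfun_def)
qed (simp add: gfun_def gfun_deriv_def)

lemma sum_gfun_deriv:
  fixes n :: nat and v t :: real and \<alpha> f :: "nat \<Rightarrow> real \<Rightarrow> real" and \<alpha>' :: "nat \<Rightarrow> real"
  defines "f' \<equiv> \<lambda>i. - v * nabla1 (\<lambda>j. gfun n \<alpha> f j t) i"
  assumes "\<alpha> 0 t = 0" "\<alpha>' 0 = 0" "k < n"
  shows "(\<Sum>j\<le>k. gfun_deriv n \<alpha> \<alpha>' f f' j t) =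
    \<alpha>' (k+1) * f (k+1) t - v * ((1 - \<alpha> (k+1) t) * gfun n \<alpha> f k t + \<alpha> (k+1) t * gfun n \<alpha> f (k+1) t)"
  using \<open>k < n\<close>
proof (induction k)
  case 0
  then show ?case
    using assms(2,3) by (simp add: gfun_deriv_def gfun_def f'_def nabla1_def algebra_simps)
next
  case (Suc k)
  then show ?case
    by (simp add: gfun_deriv_def f'_def nabla1_def algebra_simps)
qed

lemma sum_gfun_deriv_eq_h_coeff:
  fixes n :: nat and v t :: real and \<alpha> f :: "nat \<Rightarrow> real \<Rightarrow> real" and \<alpha>' :: "nat \<Rightarrow> real"
  defines "f' \<equiv> \<lambda>i. - v * nabla1 (\<lambda>j. gfun n \<alpha> f j t) i"
  assumes "\<alpha> 0 t = 0" "\<alpha>' 0 = 0" "v \<noteq> 0" "k + 2 \<le> n"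
  shows "(\<Sum>j\<le>k. gfun_deriv n \<alpha> \<alpha>' f f' j t) = - v * h_coeff v \<alpha> \<alpha>' f k t"
  using sum_gfun_deriv[where v = v and t = t and \<alpha> = \<alpha> and f = f and \<alpha>' = \<alpha>' and k = k
      and n = n] assms
  by (simp add: f'_def gfun_def h_coeff_def algebra_simps)

lemma sum_gfun_deriv_total:
  fixes m :: nat and v t :: real and \<alpha> f :: "nat \<Rightarrow> real \<Rightarrow> real" and \<alpha>' :: "nat \<Rightarrow> real"
  defines "f' \<equiv> \<lambda>i. - v * nabla1 (\<lambda>j. gfun (Suc m) \<alpha> f j t) i"
  assumes "\<alpha> 0 t = 0" "\<alpha>' 0 = 0" "\<alpha> (Suc m) t = 1" "\<alpha>' (Suc m) = 0"
  shows "(\<Sum>j\<le>m. gfun_deriv (Suc m) \<alpha> \<alpha>' f f' j t) = 0"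
  using sum_gfun_deriv[where v = v and t = t and \<alpha> = \<alpha> and f = f and \<alpha>' = \<alpha>' and k = m
      and n = "Suc m"] assms
  by (simp add: f'_def gfun_def)

lemma sum_nabla1_gfun_deriv_mult:
  fixes n :: nat and v t :: real and \<alpha> f :: "nat \<Rightarrow> real \<Rightarrow> real" and \<alpha>' y :: "nat \<Rightarrow> real"
  defines "f' \<equiv> \<lambda>i. - v * nabla1 (\<lambda>j. gfun n \<alpha> f j t) i"
  assumes "n \<ge> 1" "v \<noteq> 0" "\<alpha> 0 t = 0" "\<alpha> n t = 1" "\<alpha>' 0 = 0" "\<alpha>' n = 0"
  shows "(\<Sum>k\<le>n. - v * nabla1 (\<lambda>j. gfun_deriv n \<alpha> \<alpha>' f f' j t) k * y k) =
    v^2 * (\<Sum>k<n-1. h_coeff v \<alpha> \<alpha>' f k t * (y k - 2 * y (k+1) + y (k+2)))"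
proof -
  obtain m where m: "n = Suc m" using \<open>n \<ge> 1\<close> by (cases n) auto
  let ?g' = "\<lambda>j. gfun_deriv n \<alpha> \<alpha>' f f' j t"
  have partial: "(\<Sum>j\<le>k. ?g' j) = - v * h_coeff v \<alpha> \<alpha>' f k t" if "k < m" for k
    using sum_gfun_deriv_eq_h_coeff[where k = k] that assms m unfolding f'_def by simp
  have "(\<Sum>k\<le>n. - v * nabla1 ?g' k * y k) = - v * (\<Sum>k\<le>n. nabla1 ?g' k * y k)"
    by (simp add: sum_distrib_left mult.assoc)
  also have "(\<Sum>k\<le>n. nabla1 ?g' k * y k) =
      (\<Sum>k<m. (\<Sum>j\<le>k. ?g' j) * (y k - 2 * y (k+1) + y (k+2)))"
    using sum_nabla1_mult_second_difference[where x = ?g' and m = m and y = y]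
      sum_gfun_deriv_total[where m = m] assms m
    unfolding f'_def by (simp add: gfun_deriv_def)
  also have "\<dots> = - v * (\<Sum>k<m. h_coeff v \<alpha> \<alpha>' f k t * (y k - 2 * y (k+1) + y (k+2)))"
    using partial by (simp add: sum_distrib_left mult.assoc)
  finally show ?thesis
    using m by (simp add: power2_eq_square)
qed

lemma entropy_second_variation_nonneg:
  fixes n :: nat and v t :: real and \<alpha> f :: "nat \<Rightarrow> real \<Rightarrow> real" and \<alpha>' :: "nat \<Rightarrow> real"
  defines "f' \<equiv> \<lambda>i. - v * nabla1 (\<lambda>j. gfun n \<alpha> f j t) i"
  assumes "n \<ge> 1" "v \<noteq> 0" "\<alpha> 0 t = 0" "\<alpha> n t = 1" "\<alpha>' 0 = 0" "\<alpha>' n = 0"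
    and pos: "\<forall>k\<le>n. f k t > 0"
    and h: "\<And>k. k + 2 \<le> n \<Longrightarrow>
      0 < (f (k+1) t)^2 - f k t * f (k+2) t \<and> h_coeff v \<alpha> \<alpha>' f k t \<le> h_tilde n \<alpha> f k t"
  shows "0 \<le> (\<Sum>k\<le>n. - v * nabla1 (\<lambda>j. gfun_deriv n \<alpha> \<alpha>' f f' j t) k * (ln (f k t) + 1)
                  + (f' k)^2 / f k t)"
proof -
  obtain m where m: "n = Suc m" using \<open>n \<ge> 1\<close> by (cases n) auto
  let ?g = "\<lambda>j. gfun n \<alpha> f j t"
  let ?g' = "\<lambda>j. gfun_deriv n \<alpha> \<alpha>' f f' j t"
  let ?ln2 = "\<lambda>k. ln (f k t) - 2 * ln (f (k+1) t) + ln (f (k+2) t)"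
  let ?Q = "\<lambda>k. (?g k)^2 / f k t + (?g (k+1))^2 / f (k+2) t - 2 * ?g k * ?g (k+1) / f (k+1) t"
  have mass: "(\<Sum>k\<le>n. - v * nabla1 ?g' k) = 0"
    unfolding sum_distrib_left[symmetric] sum_nabla1 by (simp add: gfun_deriv_def)
  have log_part: "(\<Sum>k\<le>n. - v * nabla1 ?g' k * ln (f k t)) =
      v^2 * (\<Sum>k<m. h_coeff v \<alpha> \<alpha>' f k t * ?ln2 k)"
    using sum_nabla1_gfun_deriv_mult[where n = n and v = v and t = t and \<alpha> = \<alpha> and f = f
        and \<alpha>' = \<alpha>' and y = "\<lambda>k. ln (f k t)"] assms m unfolding f'_def by simp
  have "(\<Sum>k<m. ?Q k) \<le> (\<Sum>k\<le>n. (nabla1 ?g k)^2 / f k t)"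
    using sum_nabla1_square_div_ge[of ?g m "\<lambda>k. f k t"] pos m by (simp add: gfun_def)
  moreover have "(\<Sum>k\<le>n. (f' k)^2 / f k t) = v^2 * (\<Sum>k\<le>n. (nabla1 ?g k)^2 / f k t)"
    by (simp add: f'_def power_mult_distrib sum_distrib_left)
  ultimately have square_part: "v^2 * (\<Sum>k<m. ?Q k) \<le> (\<Sum>k\<le>n. (f' k)^2 / f k t)"
    by (simp add: mult_left_mono)
  have "0 \<le> h_coeff v \<alpha> \<alpha>' f k t * ?ln2 k + ?Q k" if "k < m" for k
  proof -
    have "k + 2 \<le> n" using that m by simp
    then show ?thesis
      using ln_second_difference_weighted_bound[of "f k t" "f (k+1) t" "f (k+2) t"] pos h[of k]
      by (simp add: h_tilde_def)
  qed
  then have "0 \<le> v^2 * (\<Sum>k<m. h_coeff v \<alpha> \<alpha>' f k t * ?ln2 k + ?Q k)"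
    by (intro mult_nonneg_nonneg sum_nonneg) auto
  also have "\<dots> \<le> (\<Sum>k\<le>n. - v * nabla1 ?g' k * ln (f k t)) + (\<Sum>k\<le>n. - v * nabla1 ?g' k)
                  + (\<Sum>k\<le>n. (f' k)^2 / f k t)"
    using log_part mass square_part by (simp add: sum.distrib distrib_left)
  also have "\<dots> = (\<Sum>k\<le>n. - v * nabla1 ?g' k * (ln (f k t) + 1) + (f' k)^2 / f k t)"
    by (simp add: sum.distrib sum_subtractf sum_negf distrib_left)
  finally show ?thesis .
qed

lemma has_real_derivative_nabla1:
  assumes "\<And>j. ((\<lambda>s. x j s) has_real_derivative x' j) (at t)"
  shows "((\<lambda>s. nabla1 (\<lambda>j. x j s) k) has_real_derivative nabla1 x' k) (at t)"
  using assms by (auto intro!: derivative_eq_intros simp: nabla1_def)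

lemma has_real_derivative_const_on_open_eq_0:
  assumes "(h has_real_derivative d) (at t)" "open S" "t \<in> S" "\<forall>s\<in>S. h s = c"
  shows "d = 0"
proof -
  have "(h has_real_derivative 0) (at t)"
    using has_field_derivative_transform_within_open[OF DERIV_const assms(2,3)] assms(4) by auto
  then show ?thesis using assms(1) DERIV_unique by blast
qed

lemma has_real_derivative_entropy:
  fixes p :: "nat \<Rightarrow> real \<Rightarrow> real" and p' :: "nat \<Rightarrow> real"
  assumes "\<forall>k\<le>n. (p k has_real_derivative p' k) (at t)" "\<forall>k\<le>n. p k t > 0"
  shows "((\<lambda>s. - (\<Sum>k\<le>n. p k s * ln (p k s))) has_real_derivative
    - (\<Sum>k\<le>n. p' k * (ln (p k t) + 1))) (at t)"
  using assms by (auto intro!: derivative_eq_intros sum.cong simp: field_simps) (use assms in force)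

lemma deriv2_entropy:
  fixes p p' :: "nat \<Rightarrow> real \<Rightarrow> real" and p'' :: "nat \<Rightarrow> real"
  assumes "open S" "t \<in> S"
    and p': "\<forall>k\<le>n. \<forall>s\<in>S. (p k has_real_derivative p' k s) (at s)"
    and pos: "\<forall>k\<le>n. \<forall>s\<in>S. p k s > 0"
    and p'': "\<forall>k\<le>n. (p' k has_real_derivative p'' k) (at t)"
  shows "deriv (deriv (\<lambda>s. - (\<Sum>k\<le>n. p k s * ln (p k s)))) t =
    - (\<Sum>k\<le>n. p'' k * (ln (p k t) + 1) + (p' k t)^2 / p k t)"
proof -
  have first: "- (\<Sum>k\<le>n. p' k s * (ln (p k s) + 1)) = deriv (\<lambda>s. - (\<Sum>k\<le>n. p k s * ln (p k s))) s"
    if "s \<in> S" for s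
    using has_real_derivative_entropy[of n p "\<lambda>k. p' k s" s] p' pos that
    by (simp add: DERIV_imp_deriv)
  have "((\<lambda>s. - (\<Sum>k\<le>n. p' k s * (ln (p k s) + 1))) has_real_derivative
      - (\<Sum>k\<le>n. p'' k * (ln (p k t) + 1) + (p' k t)^2 / p k t)) (at t)"
    using p' p'' pos \<open>t \<in> S\<close>
    by (auto intro!: derivative_eq_intros sum.cong simp: power2_eq_square field_simps)
  then have "(deriv (\<lambda>s. - (\<Sum>k\<le>n. p k s * ln (p k s))) has_real_derivative
      - (\<Sum>k\<le>n. p'' k * (ln (p k t) + 1) + (p' k t)^2 / p k t)) (at t)"
    using first by (rule has_field_derivative_transform_within_open[OF _ \<open>open S\<close> \<open>t \<in> S\<close>])
  then show ?thesis by (rule DERIV_imp_deriv)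
qed

lemma const_speed_path_has_real_derivative:
  assumes "const_speed_path n f v \<alpha>" "k \<le> n" "0 < s" "s < 1"
  shows "(f k has_real_derivative - v * nabla1 (\<lambda>j. gfun n \<alpha> f j s) k) (at s)"
proof -
  have "(f k has_real_derivative - v * nabla1 (\<lambda>j. gfun n \<alpha> f j s) k) (at s within {0..1})"
    using assms by (simp add: const_speed_path_def)
  then show ?thesis using assms(3,4) by (simp add: at_within_Icc_at)
qed

theorem theorem4p4:
  fixes n :: nat and f \<alpha> :: "nat \<Rightarrow> real \<Rightarrow> real" and v tstar :: real
  assumes n: "n \<ge> 1"
    and path: "const_speed_path n f v \<alpha>"
    and v: "v \<noteq> 0"
    and fpos: "\<forall>k\<le>n. \<forall>t\<in>{0..1}. f k t > 0"
    and fC2: "\<forall>k\<le>n. \<exists>f' f''.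
        (\<forall>t\<in>{0..1}. (f k has_real_derivative f' t) (at t within {0..1})
                    \<and> (f' has_real_derivative f'' t) (at t within {0..1}))
        \<and> continuous_on {0..1} f''"
    and \<alpha>C1: "\<forall>k\<le>n. \<exists>a'.
        (\<forall>t\<in>{0..1}. (\<alpha> k has_real_derivative a' t) (at t within {0..1}))
        \<and> continuous_on {0..1} a'"
    and t: "0 < tstar" "tstar < 1"
    and c1: "\<forall>k<n. \<alpha> k tstar \<le> \<alpha> (k+1) tstar"
    and c3: "\<forall>k. k + 2 \<le> n \<longrightarrow>
        \<alpha> (k+1) tstar * (1 - \<alpha> (k+1) tstar) * (f (k+1) tstar)^2
        - \<alpha> (k+2) tstar * (1 - \<alpha> k tstar) * f k tstar * f (k+2) tstar \<ge> 0"
    and c4: "\<forall>k. k + 2 \<le> n \<longrightarrow>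
        (let g = (\<lambda>j. gfun n \<alpha> f j tstar);
             fk = f k tstar; fk1 = f (k+1) tstar; fk2 = f (k+2) tstar;
             ak = \<alpha> k tstar; ak1 = \<alpha> (k+1) tstar; ak2 = \<alpha> (k+2) tstar;
             htil = (2 * g k * g (k+1) * fk1 - (g k)^2 * fk2 - (g (k+1))^2 * fk)
                    / (fk1^2 - fk * fk2);
             h = (1 - ak) * (1 - ak1) * fk + 2 * ak1 * (1 - ak1) * fk1 + ak1 * ak2 * fk2
                 - (1 / v) * fk1 * deriv (\<alpha> (k+1)) tstar
         in fk1^2 - fk * fk2 > 0 \<and> h \<le> htil)"
  shows "deriv (deriv (\<lambda>t. - (\<Sum>k\<le>n. f k t * ln (f k t)))) tstar \<le> 0"
proof -
  let ?S = "{0<..<1::real}"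
  define f' where "f' k s = - v * nabla1 (\<lambda>j. gfun n \<alpha> f j s) k" for k s
  define a' where "a' k = deriv (\<alpha> k) tstar" for k
  have f': "\<forall>k\<le>n. \<forall>s\<in>?S. (f k has_real_derivative f' k s) (at s)"
    using const_speed_path_has_real_derivative[OF path] by (simp add: f'_def)
  have \<alpha>': "(\<alpha> k has_real_derivative a' k) (at tstar)" if "k \<le> n" for k
  proof -
    obtain d where "\<forall>s\<in>{0..1}. (\<alpha> k has_real_derivative d s) (at s within {0..1})"
      using \<alpha>C1 \<open>k \<le> n\<close> by blast
    then have "(\<alpha> k has_real_derivative d tstar) (at tstar within {0..1})" using t by simp
    then have "(\<alpha> k has_real_derivative d tstar) (at tstar)" using t by (simp add: at_within_Icc_at)
    then show ?thesis by (simp add: a'_def DERIV_imp_deriv)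
  qed
  have g': "((\<lambda>s. gfun n \<alpha> f j s) has_real_derivative
      gfun_deriv n \<alpha> a' f (\<lambda>i. f' i tstar) j tstar) (at tstar)" for j
    using f' t by (intro has_real_derivative_gfun \<alpha>') auto
  have f'': "\<forall>k\<le>n. (f' k has_real_derivative
      - v * nabla1 (\<lambda>j. gfun_deriv n \<alpha> a' f (\<lambda>i. f' i tstar) j tstar) k) (at tstar)"
    unfolding f'_def[abs_def]
    by (intro allI impI DERIV_cmult has_real_derivative_nabla1 g'[unfolded f'_def])
  have ends: "\<forall>s\<in>?S. \<alpha> 0 s = 0" "\<forall>s\<in>?S. \<alpha> n s = 1"
    using path by (auto simp: const_speed_path_def coeffs_A_def)
  then have boundary: "\<alpha> 0 tstar = 0" "\<alpha> n tstar = 1" "a' 0 = 0" "a' n = 0"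
    using \<alpha>'[of 0] \<alpha>'[of n] t
    by (auto intro: has_real_derivative_const_on_open_eq_0[of _ _ tstar ?S])
  have "0 \<le> (\<Sum>k\<le>n. - v * nabla1 (\<lambda>j. gfun_deriv n \<alpha> a' f (\<lambda>i. f' i tstar) j tstar) k
      * (ln (f k tstar) + 1) + (f' k tstar)^2 / f k tstar)"
    using c4 fpos t unfolding f'_def
    by (intro entropy_second_variation_nonneg[where \<alpha> = \<alpha> and f = f, OF n v boundary])
      (auto simp: Let_def h_coeff_def h_tilde_def a'_def)
  then show ?thesis
    using deriv2_entropy[of ?S tstar n f f', OF _ _ f' _ f''] fpos t by simp
qed

end
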